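(* Let $q\geq0$ be an integer. Suppose $S_N$ admits the weak global Edgeworth expansion of order $r$ for $f\in F^{q+1}_r$. If each polynomial $P_{p,g}$ in the weak global expansion has the same parity as $p$, then $S_N$ admits the weak local Edgeworth expansion of order $r-1$ for $f$.
   Context: $X_1,X_2,\dots$ are real random variables, $S_N=\sum_{n=1}^NX_n$, $A\in\mathbb{R}$, $\sigma^2>0$, $\mathfrak{n}(y)=\frac{1}{\sqrt{2\pi\sigma^2}}e^{-y^2/(2\sigma^2)}$. "$\|f\|\,o(N^{-a})$" denotes a quantity bounded by $\|f\|\,\varepsilon_N N^{-a}$ with $\varepsilon_N\to0$ independent of $f$; the norm on $F^m_k$ is $C^m_k$. Weak global expansion of order $r$ for $f\in F^{q+1}_r$: polynomials $P_{0,g},\dots,P_{r,g}$ independent of $f$ with $\mathbb{E}(f(S_N-NA))=\sum_{p=0}^rN^{-p/2}\int P_{p,g}(z)\mathfrak{n}(z)f(z\sqrt N)\,dz+\|f\|\,o(N^{-(r+1)/2})$. Weak local expansion of order $r-1$: polynomials $P_{0,l},\dots,P_{\lfloor (r-1)/2\rfloor,l}$ independent of $f$ with $\sqrt N\,\mathbb{E}(f(S_N-NA))=\frac1{2\pi}\sum_{p=0}^{\lfloor (r-1)/2\rfloor}N^{-p}\int P_{p,l}(z)f(z)\,dz+\|f\|\,o(N^{-(r-1)/2})$. $F^m_k$: $m$ times continuously differentiable $f$ with $C^m_k(f)=\max_{0\le j\le m}\|f^{(j)}\|_{L^1}+\max_{0\le j\le k}\|x^jf\|_{L^1}<\infty$.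 *)

theory Defs
  imports "HOL-Probability.Probability" "HOL-Computational_Algebra.Polynomial"
begin

definition gauss_dens :: "real \<Rightarrow> real \<Rightarrow> real" where
  "gauss_dens s2 y = 1 / sqrt (2 * pi * s2) * exp (- (y ^ 2) / (2 * s2))"

definition Cm_diff :: "nat \<Rightarrow> (real \<Rightarrow> real) \<Rightarrow> bool" where
  "Cm_diff m f \<longleftrightarrow> (\<forall>j<m. \<forall>x. ((deriv ^^ j) f) differentiable (at x))
                     \<and> continuous_on UNIV ((deriv ^^ m) f)"

definition F_class :: "nat \<Rightarrow> nat \<Rightarrow> (real \<Rightarrow> real) \<Rightarrow> bool" where
  "F_class m k f \<longleftrightarrow> Cm_diff m f
     \<and> (\<forall>j\<le>m. integrable lborel ((deriv ^^ j) f))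
     \<and> (\<forall>j\<le>k. integrable lborel (\<lambda>x. x ^ j * f x))"

definition C_norm :: "nat \<Rightarrow> nat \<Rightarrow> (real \<Rightarrow> real) \<Rightarrow> real" where
  "C_norm m k f =
     Max ((\<lambda>j. \<integral>x. \<bar>(deriv ^^ j) f x\<bar> \<partial>lborel) ` {0..m})
   + Max ((\<lambda>j. \<integral>x. \<bar>x ^ j * f x\<bar> \<partial>lborel) ` {0..k})"

definition S_sum :: "(nat \<Rightarrow> 'a \<Rightarrow> real) \<Rightarrow> nat \<Rightarrow> 'a \<Rightarrow> real" where
  "S_sum X N \<omega> = (\<Sum>n=1..N. X n \<omega>)"

definition weak_global_expansion ::
  "'a measure \<Rightarrow> (nat \<Rightarrow> 'a \<Rightarrow> real) \<Rightarrow> real \<Rightarrow> real \<Rightarrow> nat \<Rightarrow> nat \<Rightarrow> (nat \<Rightarrow> real poly) \<Rightarrow> bool" where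
  "weak_global_expansion M X A s2 q r P \<longleftrightarrow>
    (\<exists>\<epsilon>::nat \<Rightarrow> real. \<epsilon> \<longlonglongrightarrow> 0 \<and>
      (\<forall>N\<ge>1. \<forall>f. F_class (Suc q) r f \<longrightarrow>
         \<bar>(\<integral>\<omega>. f (S_sum X N \<omega> - real N * A) \<partial>M)
          - (\<Sum>p\<le>r. real N powr (- real p / 2) *
               (\<integral>z. poly (P p) z * gauss_dens s2 z * f (z * sqrt (real N)) \<partial>lborel))\<bar>
         \<le> C_norm (Suc q) r f * \<epsilon> N * real N powr (- (real r + 1) / 2)))"

text \<open>Weak local Edgeworth expansion of order r-1 for f in F^{q+1}_r, with polynomials
  P 0 .. P (floor((r-1)/2)); the index set {p. p < (r+1) div 2} is exactly
  {0..floor((r-1)/2)} (empty when r = 0).\<close>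
definition weak_local_expansion ::
  "'a measure \<Rightarrow> (nat \<Rightarrow> 'a \<Rightarrow> real) \<Rightarrow> real \<Rightarrow> nat \<Rightarrow> nat \<Rightarrow> (nat \<Rightarrow> real poly) \<Rightarrow> bool" where
  "weak_local_expansion M X A q r P \<longleftrightarrow>
    (\<exists>\<epsilon>::nat \<Rightarrow> real. \<epsilon> \<longlonglongrightarrow> 0 \<and>
      (\<forall>N\<ge>1. \<forall>f. F_class (Suc q) r f \<longrightarrow>
         \<bar>sqrt (real N) * (\<integral>\<omega>. f (S_sum X N \<omega> - real N * A) \<partial>M)
          - 1 / (2 * pi) * (\<Sum>p<(r + 1) div 2. real N powr (- real p) *
               (\<integral>z. poly (P p) z * f z \<partial>lborel))\<bar>
         \<le> C_norm (Suc q) r f * \<epsilon> N * real N powr (- (real r - 1) / 2)))"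

end

theory Submission
  imports Defs
begin

text \<open>Write h_p = P_{p,g} n_s2 for the Gaussian weights of the global expansion. A polynomial times a
  Gaussian has bounded derivatives of every order, so Taylor's formula gives
  h_p(t) = sum_{j < r-p} a_{p,j} t^j + O(|t|^(r-p)), and the parity of P_{p,g} makes a_{p,j} vanish
  unless p + j is even. Substituting y = z sqrt N,
    sqrt N * int h_p(z) f(z sqrt N) dz = int h_p(y / sqrt N) f(y) dy
                                       = sum_j a_{p,j} N^(-j/2) int y^j f(y) dy + O(N^(-(r-p)/2) ||f||).
  Hence, after multiplying the global expansion by sqrt N, the term of index p contributes only
  powers N^(-(p+j)/2) with p + j even, i.e. integer powers N^(-k); collecting them gives the local
  expansion with P_{k,l}(y) = 2 pi sum_{p <= 2k} a_{p,2k-p} y^(2k-p).\<close>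

lemma power_div_fact_le_exp:
  fixes x :: real
  assumes "0 \<le> x" shows "x ^ n / fact n \<le> exp x"
proof -
  obtain t where t: "exp x = (\<Sum>m<Suc n. x ^ m / fact m) + exp t / fact (Suc n) * x ^ Suc n"
    using Maclaurin_exp_le[of x "Suc n"] by blast
  have "x ^ n / fact n \<le> (\<Sum>m<Suc n. x ^ m / fact m)"
    by (rule member_le_sum) (use assms in auto)
  moreover have "0 \<le> exp t / fact (Suc n) * x ^ Suc n" using assms by simp
  ultimately show ?thesis using t by linarith
qed

lemma abs_power_mult_exp_neg_square_le:
  fixes t b :: real assumes b: "b > 0"
  shows "\<bar>t\<bar> ^ i * exp (- (t ^ 2) / b) \<le> 1 + fact i * b ^ i"
proof (cases "\<bar>t\<bar> \<le> 1")
  case True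
  then have "\<bar>t\<bar> ^ i * exp (- (t ^ 2) / b) \<le> 1"
    using b by (intro mult_le_one) (auto simp: power_le_one)
  moreover have "0 \<le> fact i * b ^ i" using b by simp
  ultimately show ?thesis by linarith
next
  case False
  have "\<bar>t\<bar> ^ i \<le> \<bar>t\<bar> ^ (2 * i)"
    using False by (intro power_increasing) auto
  also have "\<dots> = (t\<^sup>2) ^ i" by (simp add: power_mult power2_abs)
  also have "\<dots> = fact i * b ^ i * ((t\<^sup>2 / b) ^ i / fact i)"
    using b by (simp add: power_divide)
  also have "\<dots> \<le> fact i * b ^ i * exp (t\<^sup>2 / b)"
    using b by (intro mult_left_mono power_div_fact_le_exp) auto
  finally have "\<bar>t\<bar> ^ i * exp (- (t ^ 2) / b) \<le> fact i * b ^ i * (exp (t\<^sup>2 / b) * exp (- (t ^ 2) / b))"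
    by (simp add: mult_right_mono mult.assoc)
  then show ?thesis by (simp flip: exp_add)
qed

lemma poly_mult_gauss_dens_bounded:
  assumes "s2 > 0" shows "\<exists>B. \<forall>t. \<bar>poly Q t * gauss_dens s2 t\<bar> \<le> B"
proof (intro exI allI)
  fix t :: real
  define b where "b = 2 * s2"
  have b: "b > 0" using assms by (simp add: b_def)
  define k where "k = 1 / sqrt (2 * pi * s2)"
  have "\<bar>poly Q t * gauss_dens s2 t\<bar> = k * \<bar>\<Sum>i\<le>degree Q. coeff Q i * (t ^ i * exp (- (t ^ 2) / b))\<bar>"
    using assms by (simp add: gauss_dens_def poly_altdef sum_distrib_right abs_mult k_def b_def mult_ac)
  also have "\<dots> \<le> k * (\<Sum>i\<le>degree Q. \<bar>coeff Q i\<bar> * (1 + fact i * b ^ i))"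
  proof (intro mult_left_mono order.trans[OF sum_abs] sum_mono)
    fix i
    show "\<bar>coeff Q i * (t ^ i * exp (- (t ^ 2) / b))\<bar> \<le> \<bar>coeff Q i\<bar> * (1 + fact i * b ^ i)"
      using abs_power_mult_exp_neg_square_le[OF b, of t i]
      by (simp add: abs_mult power_abs mult_left_mono)
  qed (use assms in \<open>simp add: k_def\<close>)
  finally show "\<bar>poly Q t * gauss_dens s2 t\<bar> \<le> k * (\<Sum>i\<le>degree Q. \<bar>coeff Q i\<bar> * (1 + fact i * b ^ i))" .
qed

lemma has_real_derivative_poly_mult_gauss_dens:
  assumes "s2 \<noteq> 0"
  shows "((\<lambda>t. poly Q t * gauss_dens s2 t) has_real_derivative
           poly (pderiv Q - smult (1 / s2) (pCons 0 Q)) x * gauss_dens s2 x) (at x)"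
proof -
  define k where "k = 1 / sqrt (2 * pi * s2)"
  have "((\<lambda>t. k * poly Q t * exp (- (t ^ 2) / (2 * s2))) has_real_derivative
          k * poly (pderiv Q) x * exp (- (x ^ 2) / (2 * s2))
          + k * poly Q x * (exp (- (x ^ 2) / (2 * s2)) * (- (2 * x ^ 1 * 1) / (2 * s2)))) (at x)"
    using assms by (intro derivative_eq_intros) auto
  then show ?thesis
    using assms by (simp add: gauss_dens_def flip: k_def) (simp add: algebra_simps)
qed

text \<open>The m-th derivative of poly P * gauss_dens s2 is poly (gauss_deriv_poly s2 P m) * gauss_dens s2.\<close>
primrec gauss_deriv_poly :: "real \<Rightarrow> real poly \<Rightarrow> nat \<Rightarrow> real poly" where
  "gauss_deriv_poly s2 P 0 = P"
| "gauss_deriv_poly s2 P (Suc m) =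
     pderiv (gauss_deriv_poly s2 P m) - smult (1 / s2) (pCons 0 (gauss_deriv_poly s2 P m))"

lemma derivatives_parity:
  fixes d :: "nat \<Rightarrow> real \<Rightarrow> real"
  assumes diff: "\<And>m x. DERIV (d m) x :> d (Suc m) x"
    and par: "\<And>t. d 0 (-t) = (-1) ^ p * d 0 t"
  shows "d m (-t) = (-1) ^ (p + m) * d m t"
proof (induction m arbitrary: t)
  case 0
  show ?case using par by simp
next
  case (Suc m)
  have "DERIV (\<lambda>t. d m (-t)) t :> d (Suc m) (-t) * (-1)"
    by (rule DERIV_chain2[OF diff]) (auto intro!: derivative_eq_intros)
  moreover have "DERIV (\<lambda>t. d m (-t)) t :> (-1) ^ (p + m) * d (Suc m) t"
    unfolding Suc.IH by (auto intro!: derivative_eq_intros diff)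
  ultimately have "d (Suc m) (-t) * (-1) = (-1) ^ (p + m) * d (Suc m) t"
    by (rule DERIV_unique)
  then show ?case by simp
qed

lemma Maclaurin_bounded_remainder:
  fixes d :: "nat \<Rightarrow> real \<Rightarrow> real"
  assumes diff: "\<And>m x. DERIV (d m) x :> d (Suc m) x"
    and bound: "\<And>t. \<bar>d D t\<bar> \<le> B"
  shows "\<bar>d 0 x - (\<Sum>j<D. d j 0 / fact j * x ^ j)\<bar> \<le> B / fact D * \<bar>x\<bar> ^ D"
proof -
  obtain t where "d 0 x = (\<Sum>j<D. d j 0 / fact j * x ^ j) + d D t / fact D * x ^ D"
    using Maclaurin_all_le[where diff=d and f="d 0" and n=D and x=x] diff by blast
  then have "\<bar>d 0 x - (\<Sum>j<D. d j 0 / fact j * x ^ j)\<bar> = \<bar>d D t\<bar> / fact D * \<bar>x\<bar> ^ D"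
    by (simp add: abs_mult power_abs)
  also have "\<dots> \<le> B / fact D * \<bar>x\<bar> ^ D"
    by (intro mult_right_mono divide_right_mono bound) auto
  finally show ?thesis .
qed

lemma poly_mult_gauss_dens_Maclaurin_parity:
  assumes s2: "s2 > 0" and par: "\<And>t. poly P (-t) = (-1) ^ p * poly P t"
  shows "\<exists>a C. C \<ge> 0 \<and> (\<forall>j. odd (p + j) \<longrightarrow> a j = 0) \<and>
     (\<forall>t. \<bar>poly P t * gauss_dens s2 t - (\<Sum>j<D. a j * t ^ j)\<bar> \<le> C * \<bar>t\<bar> ^ D)"
proof -
  define d where "d m t = poly (gauss_deriv_poly s2 P m) t * gauss_dens s2 t" for m t
  have diff: "DERIV (d m) x :> d (Suc m) x" for m x
    unfolding d_def using has_real_derivative_poly_mult_gauss_dens s2 by simp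
  have "d 0 (-t) = (-1) ^ p * d 0 t" for t
    using par by (simp add: d_def gauss_dens_def)
  then have "d j 0 = 0" if "odd (p + j)" for j
    using derivatives_parity[of d, OF diff, of p j 0] that by simp
  moreover obtain B where B: "\<And>t. \<bar>d D t\<bar> \<le> B"
    using poly_mult_gauss_dens_bounded[OF s2] unfolding d_def by blast
  moreover have "B \<ge> 0" using B[of 0] by linarith
  ultimately show ?thesis
    using Maclaurin_bounded_remainder[OF diff B]
    by (intro exI[of _ "\<lambda>j. d j 0 / fact j"] exI[of _ "B / fact D"]) (simp add: d_def)
qed

lemma gauss_weights_Maclaurin_parity:
  fixes P :: "nat \<Rightarrow> real poly"
  assumes s2: "s2 > 0" and par: "\<And>p z. p \<le> r \<Longrightarrow> poly (P p) (- z) = (-1) ^ p * poly (P p) z"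
  obtains a :: "nat \<Rightarrow> nat \<Rightarrow> real" and C :: "nat \<Rightarrow> real"
  where "\<And>p j. odd (p + j) \<Longrightarrow> a p j = 0" and "\<And>p. C p \<ge> 0"
    and "\<And>p t. p \<le> r \<Longrightarrow>
           \<bar>poly (P p) t * gauss_dens s2 t - (\<Sum>j<r - p. a p j * t ^ j)\<bar> \<le> C p * \<bar>t\<bar> ^ (r - p)"
proof -
  define P' where "P' p = (if p \<le> r then P p else 0)" for p
  have "\<forall>p. \<exists>a C. C \<ge> 0 \<and> (\<forall>j. odd (p + j) \<longrightarrow> a j = 0) \<and>
     (\<forall>t. \<bar>poly (P' p) t * gauss_dens s2 t - (\<Sum>j<r - p. a j * t ^ j)\<bar> \<le> C * \<bar>t\<bar> ^ (r - p))"
    using poly_mult_gauss_dens_Maclaurin_parity[OF s2] par by (simp add: P'_def)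
  then obtain a C where aC: "\<And>p. C p \<ge> 0 \<and> (\<forall>j. odd (p + j) \<longrightarrow> a p j = 0) \<and>
     (\<forall>t. \<bar>poly (P' p) t * gauss_dens s2 t - (\<Sum>j<r - p. a p j * t ^ j)\<bar> \<le> C p * \<bar>t\<bar> ^ (r - p))"
    by metis
  show ?thesis
  proof (rule that)
    fix p t assume "p \<le> r"
    then show "\<bar>poly (P p) t * gauss_dens s2 t - (\<Sum>j<r - p. a p j * t ^ j)\<bar> \<le> C p * \<bar>t\<bar> ^ (r - p)"
      using aC[of p] by (simp add: P'_def)
  qed (use aC in auto)
qed

lemma powr_neg_half_eq:
  fixes n :: real assumes "n > 0" shows "n powr (- real j / 2) = 1 / sqrt n ^ j"
proof -
  have "sqrt n ^ j = n powr (real j / 2)"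
    using assms by (simp add: powr_half_sqrt[symmetric] powr_power)
  then show ?thesis by (simp add: powr_minus_divide)
qed

lemma moment_le_C_norm:
  assumes "j \<le> k" shows "(\<integral>x. \<bar>x ^ j * f x\<bar> \<partial>lborel) \<le> C_norm m k f"
proof -
  have "(\<integral>x. \<bar>x ^ j * f x\<bar> \<partial>lborel) \<le> Max ((\<lambda>j. \<integral>x. \<bar>x ^ j * f x\<bar> \<partial>lborel) ` {0..k})"
    using assms by (intro Max_ge) auto
  moreover have "(\<integral>x. \<bar>(deriv ^^ 0) f x\<bar> \<partial>lborel) \<le> Max ((\<lambda>j. \<integral>x. \<bar>(deriv ^^ j) f x\<bar> \<partial>lborel) ` {0..m})"
    by (intro Max_ge) (auto intro!: image_eqI[where x=0])
  moreover have "0 \<le> (\<integral>x. \<bar>(deriv ^^ 0) f x\<bar> \<partial>lborel)" by simp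
  ultimately show ?thesis unfolding C_norm_def by linarith
qed

lemma integral_lborel_scale:
  fixes c :: real assumes "c > 0"
  shows "c * (\<integral>z. h z * f (z * c) \<partial>lborel) = (\<integral>y. h (y / c) * f y \<partial>lborel)"
  using lborel_integral_real_affine[of c "\<lambda>y. h (y / c) * f y" 0] assms
  by (simp add: mult.commute)

lemma scaled_integral_Maclaurin_error:
  fixes c C :: real and h :: "real \<Rightarrow> real"
  assumes c: "c > 0" and F: "F_class m r f" and Dr: "D \<le> r"
    and hm: "h \<in> borel_measurable borel"
    and hb: "\<And>t. \<bar>h t - (\<Sum>j<D. a j * t ^ j)\<bar> \<le> C * \<bar>t\<bar> ^ D" and C0: "C \<ge> 0"
  shows "\<bar>c * (\<integral>z. h z * f (z * c) \<partial>lborel) - (\<Sum>j<D. a j / c ^ j * (\<integral>y. y ^ j * f y \<partial>lborel))\<bar>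
     \<le> C / c ^ D * C_norm m r f"
proof -
  have mom: "\<And>j. j \<le> r \<Longrightarrow> integrable lborel (\<lambda>x. x ^ j * f x)"
    using F unfolding F_class_def by auto
  have "integrable lborel f" using F unfolding F_class_def by (metis funpow_0 le0)
  then have [measurable]: "f \<in> borel_measurable borel" by simp
  note hm[measurable]
  define S where "S y = (\<Sum>j<D. a j / c ^ j * (y ^ j * f y))" for y
  define R where "R y = (h (y / c) - (\<Sum>j<D. a j * (y / c) ^ j)) * f y" for y
  have Sint: "integrable lborel S"
    unfolding S_def using mom Dr by auto
  have Sval: "(\<integral>y. S y \<partial>lborel) = (\<Sum>j<D. a j / c ^ j * (\<integral>y. y ^ j * f y \<partial>lborel))"
    unfolding S_def using mom Dr
    by (subst Bochner_Integration.integral_sum) (auto intro!: Bochner_Integration.integrable_mult_right)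
  have R_bound: "\<bar>R y\<bar> \<le> C / c ^ D * \<bar>y ^ D * f y\<bar>" for y
  proof -
    have "\<bar>R y\<bar> \<le> C * \<bar>y / c\<bar> ^ D * \<bar>f y\<bar>"
      unfolding R_def abs_mult by (intro mult_right_mono hb) auto
    also have "\<dots> = C / c ^ D * \<bar>y ^ D * f y\<bar>" using c by (simp add: abs_mult power_abs power_divide)
    finally show ?thesis .
  qed
  have Mint: "integrable lborel (\<lambda>y. C / c ^ D * \<bar>y ^ D * f y\<bar>)"
    using mom Dr by auto
  have "R \<in> borel_measurable lborel" unfolding R_def by measurable
  then have Rint: "integrable lborel R"
    by (rule Bochner_Integration.integrable_bound[OF Mint]) (use R_bound C0 c in \<open>auto simp: abs_mult\<close>)
  have "c * (\<integral>z. h z * f (z * c) \<partial>lborel) = (\<integral>y. S y + R y \<partial>lborel)"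
    unfolding integral_lborel_scale[OF c]
    by (simp add: S_def R_def algebra_simps sum_distrib_left power_divide)
  also have "\<dots> = (\<Sum>j<D. a j / c ^ j * (\<integral>y. y ^ j * f y \<partial>lborel)) + (\<integral>y. R y \<partial>lborel)"
    using Sint Rint Sval by simp
  finally have "\<bar>c * (\<integral>z. h z * f (z * c) \<partial>lborel) - (\<Sum>j<D. a j / c ^ j * (\<integral>y. y ^ j * f y \<partial>lborel))\<bar>
      = \<bar>\<integral>y. R y \<partial>lborel\<bar>" by simp
  also have "\<dots> \<le> (\<integral>y. C / c ^ D * \<bar>y ^ D * f y\<bar> \<partial>lborel)"
    by (intro order.trans[OF integral_abs_bound] integral_mono R_bound Mint integrable_abs Rint)
  also have "\<dots> = C / c ^ D * (\<integral>y. \<bar>y ^ D * f y\<bar> \<partial>lborel)" by simp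
  also have "\<dots> \<le> C / c ^ D * C_norm m r f"
    using c C0 Dr by (intro mult_left_mono moment_le_C_norm) auto
  finally show ?thesis .
qed

lemma sum_triangle_even_diagonals:
  fixes c :: real and a :: "nat \<Rightarrow> nat \<Rightarrow> real" and M :: "nat \<Rightarrow> real"
  assumes odd0: "\<And>p j. odd (p + j) \<Longrightarrow> a p j = 0"
  shows "(\<Sum>p\<le>r. 1 / c ^ p * (\<Sum>j<r - p. a p j / c ^ j * M j))
       = (\<Sum>k<(r + 1) div 2. 1 / c ^ (2 * k) * (\<Sum>p\<le>2 * k. a p (2 * k - p) * M (2 * k - p)))"
proof -
  define F where "F = (\<lambda>(p, j). a p j * M j / c ^ (p + j))"
  define S where "S = Sigma {..r} (\<lambda>p. {..<r - p})"
  define S' where "S' = {x\<in>S. even (fst x + snd x)}"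
  define T where "T = Sigma {..<(r + 1) div 2} (\<lambda>k. {..2 * k})"
  define \<phi> where "\<phi> = (\<lambda>(k::nat, p::nat). (p, 2 * k - p))"
  have "bij_betw \<phi> T S'"
  proof (rule bij_betw_byWitness[where f'="\<lambda>(p, j). ((p + j) div 2, p)"])
    show "\<phi> ` T \<subseteq> S'" by (auto simp: T_def S_def S'_def \<phi>_def)
  qed (auto simp: T_def S_def S'_def \<phi>_def elim!: evenE)
  have "(\<Sum>p\<le>r. 1 / c ^ p * (\<Sum>j<r - p. a p j / c ^ j * M j)) = (\<Sum>p\<le>r. \<Sum>j<r - p. F (p, j))"
    by (intro sum.cong refl) (simp add: F_def sum_distrib_left power_add field_simps)
  also have "\<dots> = sum F S" unfolding S_def by (subst sum.Sigma) auto
  also have "\<dots> = sum F S'"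
    using odd0 by (intro sum.mono_neutral_right) (auto simp: S_def S'_def F_def, metis even_add, metis even_add)
  also have "\<dots> = sum (F \<circ> \<phi>) T"
    by (rule sum.reindex_bij_betw[symmetric, unfolded comp_def[symmetric]]) fact
  also have "\<dots> = (\<Sum>k<(r + 1) div 2. \<Sum>p\<le>2 * k. F (\<phi> (k, p)))"
    unfolding T_def by (subst sum.Sigma) auto
  also have "\<dots> = (\<Sum>k<(r + 1) div 2. 1 / c ^ (2 * k) * (\<Sum>p\<le>2 * k. a p (2 * k - p) * M (2 * k - p)))"
    by (intro sum.cong refl) (simp add: F_def \<phi>_def sum_distrib_left)
  finally show ?thesis .
qed

text \<open>With a p j the j-th Maclaurin coefficient of h_p, this is P_{k,l}.\<close>
definition local_edgeworth_poly :: "(nat \<Rightarrow> nat \<Rightarrow> real) \<Rightarrow> nat \<Rightarrow> real poly" where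
  "local_edgeworth_poly a k = smult (2 * pi) (\<Sum>p\<le>2 * k. monom (a p (2 * k - p)) (2 * k - p))"

lemma integral_local_edgeworth_poly:
  assumes F: "F_class m r f" and k: "2 * k \<le> r"
  shows "(\<integral>z. poly (local_edgeworth_poly a k) z * f z \<partial>lborel)
       = 2 * pi * (\<Sum>p\<le>2 * k. a p (2 * k - p) * (\<integral>y. y ^ (2 * k - p) * f y \<partial>lborel))"
proof -
  have mom: "\<And>j. j \<le> r \<Longrightarrow> integrable lborel (\<lambda>x. x ^ j * f x)"
    using F unfolding F_class_def by auto
  have "(\<integral>z. poly (local_edgeworth_poly a k) z * f z \<partial>lborel)
      = (\<integral>z. 2 * pi * (\<Sum>p\<le>2 * k. a p (2 * k - p) * (z ^ (2 * k - p) * f z)) \<partial>lborel)"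
    by (simp add: local_edgeworth_poly_def poly_sum poly_monom sum_distrib_left sum_distrib_right mult_ac)
  also have "\<dots> = 2 * pi * (\<Sum>p\<le>2 * k. a p (2 * k - p) * (\<integral>y. y ^ (2 * k - p) * f y \<partial>lborel))"
    using mom k
    by (subst Bochner_Integration.integral_mult_right_zero, subst Bochner_Integration.integral_sum)
       (auto intro!: Bochner_Integration.integrable_mult_right)
  finally show ?thesis .
qed

lemma scaled_integral_sum_Maclaurin_regroup:
  fixes c :: real and h :: "nat \<Rightarrow> real \<Rightarrow> real"
  assumes c: "c > 0" and F: "F_class m r f"
    and hm: "\<And>p. h p \<in> borel_measurable borel"
    and a_odd: "\<And>p j. odd (p + j) \<Longrightarrow> a p j = 0" and C0: "\<And>p. C p \<ge> 0"
    and hb: "\<And>p t. p \<le> r \<Longrightarrow> \<bar>h p t - (\<Sum>j<r - p. a p j * t ^ j)\<bar> \<le> C p * \<bar>t\<bar> ^ (r - p)"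
  shows "\<bar>c * (\<Sum>p\<le>r. 1 / c ^ p * (\<integral>z. h p z * f (z * c) \<partial>lborel))
           - 1 / (2 * pi) * (\<Sum>k<(r + 1) div 2.
                1 / c ^ (2 * k) * (\<integral>z. poly (local_edgeworth_poly a k) z * f z \<partial>lborel))\<bar>
         \<le> (\<Sum>p\<le>r. C p) * C_norm m r f / c ^ r"
proof -
  define Mj where "Mj j = (\<integral>y. y ^ j * f y \<partial>lborel)" for j
  define B where "B p = c * (\<integral>z. h p z * f (z * c) \<partial>lborel) - (\<Sum>j<r - p. a p j / c ^ j * Mj j)" for p
  have B_bound: "1 / c ^ p * \<bar>B p\<bar> \<le> C p * C_norm m r f / c ^ r" if "p \<le> r" for p
  proof -
    have "\<bar>B p\<bar> \<le> C p / c ^ (r - p) * C_norm m r f"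
      unfolding B_def Mj_def using that
      by (intro scaled_integral_Maclaurin_error[OF c F _ hm hb C0]) auto
    then have "1 / c ^ p * \<bar>B p\<bar> \<le> 1 / c ^ p * (C p / c ^ (r - p) * C_norm m r f)"
      using c by (intro mult_left_mono) auto
    also have "\<dots> = C p * C_norm m r f / c ^ r"
      using that c by (simp flip: power_add)
    finally show ?thesis .
  qed
  have "1 / (2 * pi) * (\<Sum>k<(r + 1) div 2.
          1 / c ^ (2 * k) * (\<integral>z. poly (local_edgeworth_poly a k) z * f z \<partial>lborel))
      = (\<Sum>k<(r + 1) div 2. 1 / c ^ (2 * k) * (\<Sum>p\<le>2 * k. a p (2 * k - p) * Mj (2 * k - p)))"
    unfolding sum_distrib_left
    by (intro sum.cong refl) (simp add: integral_local_edgeworth_poly[OF F] Mj_def sum_divide_distrib)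
  also have "\<dots> = (\<Sum>p\<le>r. 1 / c ^ p * (\<Sum>j<r - p. a p j / c ^ j * Mj j))"
    by (rule sum_triangle_even_diagonals[symmetric]) (rule a_odd)
  finally have "\<bar>c * (\<Sum>p\<le>r. 1 / c ^ p * (\<integral>z. h p z * f (z * c) \<partial>lborel))
           - 1 / (2 * pi) * (\<Sum>k<(r + 1) div 2.
                1 / c ^ (2 * k) * (\<integral>z. poly (local_edgeworth_poly a k) z * f z \<partial>lborel))\<bar>
      = \<bar>\<Sum>p\<le>r. 1 / c ^ p * B p\<bar>"
    by (simp add: B_def sum_distrib_left right_diff_distrib sum_subtractf mult_ac)
  also have "\<dots> \<le> (\<Sum>p\<le>r. C p * C_norm m r f / c ^ r)"
    using c B_bound by (intro order.trans[OF sum_abs] sum_mono) (simp add: abs_mult)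
  also have "\<dots> = (\<Sum>p\<le>r. C p) * C_norm m r f / c ^ r"
    by (simp add: sum_divide_distrib sum_distrib_right)
  finally show ?thesis .
qed

lemma local_bound_from_global_bound:
  fixes N :: nat and h :: "nat \<Rightarrow> real \<Rightarrow> real"
  assumes N: "N \<ge> 1" and F: "F_class m r f"
    and hm: "\<And>p. h p \<in> borel_measurable borel"
    and a_odd: "\<And>p j. odd (p + j) \<Longrightarrow> a p j = 0" and C0: "\<And>p. C p \<ge> 0"
    and hb: "\<And>p t. p \<le> r \<Longrightarrow> \<bar>h p t - (\<Sum>j<r - p. a p j * t ^ j)\<bar> \<le> C p * \<bar>t\<bar> ^ (r - p)"
    and global: "\<bar>E - (\<Sum>p\<le>r. real N powr (- real p / 2) * (\<integral>z. h p z * f (z * sqrt (real N)) \<partial>lborel))\<bar>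
                   \<le> C_norm m r f * e * real N powr (- (real r + 1) / 2)"
  shows "\<bar>sqrt (real N) * E - 1 / (2 * pi) * (\<Sum>k<(r + 1) div 2. real N powr (- real k) *
             (\<integral>z. poly (local_edgeworth_poly a k) z * f z \<partial>lborel))\<bar>
         \<le> C_norm m r f * ((e + (\<Sum>p\<le>r. C p)) * real N powr (- 1 / 2)) * real N powr (- (real r - 1) / 2)"
proof -
  define c where "c = sqrt (real N)"
  have n: "real N > 0" using N by simp
  have c: "c > 0" using n by (simp add: c_def)
  have powr_half: "real N powr (- real j / 2) = 1 / c ^ j" for j
    using powr_neg_half_eq[OF n] by (simp add: c_def)
  have powr_even: "real N powr (- real k) = 1 / c ^ (2 * k)" for k
    using powr_half[of "2 * k"] by simp
  have powr_split: "real N powr (- 1 / 2) * real N powr (- (real r - 1) / 2) = 1 / c ^ r"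
  proof -
    have "- 1 / 2 + - (real r - 1) / 2 = - real r / 2" by (simp add: field_simps)
    then show ?thesis by (simp only: powr_add[symmetric] powr_half)
  qed
  define Cn where "Cn = C_norm m r f"
  define G where "G = (\<Sum>p\<le>r. 1 / c ^ p * (\<integral>z. h p z * f (z * c) \<partial>lborel))"
  define L where "L = 1 / (2 * pi) * (\<Sum>k<(r + 1) div 2.
                        1 / c ^ (2 * k) * (\<integral>z. poly (local_edgeworth_poly a k) z * f z \<partial>lborel))"
  have powr_Suc: "real N powr (- (real r + 1) / 2) = 1 / c ^ Suc r"
    using powr_half[of "Suc r"] by (simp add: add.commute)
  have global_c: "\<bar>E - G\<bar> \<le> Cn * e / c ^ Suc r"
    using global unfolding powr_Suc powr_half by (simp add: G_def Cn_def c_def)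
  have local_c: "\<bar>c * G - L\<bar> \<le> (\<Sum>p\<le>r. C p) * Cn / c ^ r"
    unfolding G_def L_def Cn_def by (rule scaled_integral_sum_Maclaurin_regroup[OF c F hm a_odd C0 hb])
  have "\<bar>c * E - L\<bar> \<le> \<bar>c * (E - G)\<bar> + \<bar>c * G - L\<bar>"
    using abs_triangle_ineq[of "c * (E - G)" "c * G - L"] by (simp add: algebra_simps)
  also have "\<dots> = c * \<bar>E - G\<bar> + \<bar>c * G - L\<bar>" using c by (simp add: abs_mult)
  also have "\<dots> \<le> c * (Cn * e / c ^ Suc r) + (\<Sum>p\<le>r. C p) * Cn / c ^ r"
    using c global_c local_c by (intro add_mono mult_left_mono) auto
  also have "\<dots> = Cn * (e + (\<Sum>p\<le>r. C p)) * (1 / c ^ r)"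
    using c by (simp add: field_simps)
  also have "\<dots> = Cn * ((e + (\<Sum>p\<le>r. C p)) * real N powr (- 1 / 2)) * real N powr (- (real r - 1) / 2)"
    unfolding powr_split[symmetric] by (simp only: mult_ac)
  finally show ?thesis
    unfolding powr_even c_def[symmetric] L_def[symmetric] Cn_def[symmetric] .
qed

theorem propositionA2:
  fixes M :: "'a measure" and X :: "nat \<Rightarrow> 'a \<Rightarrow> real"
    and A s2 :: real and q r :: nat and Pg :: "nat \<Rightarrow> real poly"
  assumes "prob_space M"
    and "\<And>n. X n \<in> borel_measurable M"
    and "s2 > 0"
    and "weak_global_expansion M X A s2 q r Pg"
    and "\<And>p z. p \<le> r \<Longrightarrow> poly (Pg p) (- z) = (-1) ^ p * poly (Pg p) z"
  shows "\<exists>Pl :: nat \<Rightarrow> real poly. weak_local_expansion M X A q r Pl"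
proof -
  obtain \<epsilon> :: "nat \<Rightarrow> real" where \<epsilon>: "\<epsilon> \<longlonglongrightarrow> 0"
    and global: "\<And>N f. N \<ge> 1 \<Longrightarrow> F_class (Suc q) r f \<Longrightarrow>
         \<bar>(\<integral>\<omega>. f (S_sum X N \<omega> - real N * A) \<partial>M)
          - (\<Sum>p\<le>r. real N powr (- real p / 2) *
               (\<integral>z. poly (Pg p) z * gauss_dens s2 z * f (z * sqrt (real N)) \<partial>lborel))\<bar>
         \<le> C_norm (Suc q) r f * \<epsilon> N * real N powr (- (real r + 1) / 2)"
    using assms(4) unfolding weak_global_expansion_def by blast
  obtain a C where a_odd: "\<And>p j. odd (p + j) \<Longrightarrow> a p j = 0" and C0: "\<And>p. C p \<ge> 0"
    and taylor: "\<And>p t. p \<le> r \<Longrightarrow>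
           \<bar>poly (Pg p) t * gauss_dens s2 t - (\<Sum>j<r - p. a p j * t ^ j)\<bar> \<le> C p * \<bar>t\<bar> ^ (r - p)"
    using gauss_weights_Maclaurin_parity[OF assms(3,5)] by blast
  have hm: "(\<lambda>z. poly (Pg p) z * gauss_dens s2 z) \<in> borel_measurable borel" for p
    unfolding gauss_dens_def using assms(3) by (intro borel_measurable_continuous_onI continuous_intros) auto
  have "(\<lambda>N. (\<epsilon> N + (\<Sum>p\<le>r. C p)) * real N powr (- 1 / 2)) \<longlonglongrightarrow> (0 + (\<Sum>p\<le>r. C p)) * 0"
    by (intro tendsto_intros \<epsilon> tendsto_neg_powr filterlim_real_sequentially) auto
  then show ?thesis
    unfolding weak_local_expansion_def
    using local_bound_from_global_bound[OF _ _ hm a_odd C0 taylor global] by auto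
qed

end
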